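(* For every $n\ge 2$ there is a finite poset $P$ excluding $\mathbf{3}+\mathbf{3}$ such that $\dim(P)\ge n$ and every convex subposet $Q$ of $P$ satisfies $\dim(Q)\le h(Q)+1$, where $h(Q)$ denotes the height of $Q$.
   Context: $\mathbf{3}+\mathbf{3}$ is the disjoint union of two $3$-element chains with all points of one incomparable to all points of the other; $P$ excludes it if no subposet is isomorphic to it. A subposet $Q$ is convex if $x,z\in Q$ and $x<y<z$ imply $y\in Q$. $\dim$ denotes the Dushnik–Miller dimension. *)

theory Defs
  imports Main
begin

definition poset :: "'a set \<Rightarrow> 'a rel \<Rightarrow> bool" where
  "poset X R \<longleftrightarrow> R \<subseteq> X \<times> X \<and> partial_order_on X R"

definition sub_order :: "'a set \<Rightarrow> 'a rel \<Rightarrow> 'a rel" where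
  "sub_order Q R = R \<inter> (Q \<times> Q)"

definition strictly_below :: "'a rel \<Rightarrow> 'a \<Rightarrow> 'a \<Rightarrow> bool" where
  "strictly_below R x y \<longleftrightarrow> (x, y) \<in> R \<and> x \<noteq> y"

definition incomparable :: "'a rel \<Rightarrow> 'a \<Rightarrow> 'a \<Rightarrow> bool" where
  "incomparable R x y \<longleftrightarrow> (x, y) \<notin> R \<and> (y, x) \<notin> R"

definition excludes_3_3 :: "'a set \<Rightarrow> 'a rel \<Rightarrow> bool" where
  "excludes_3_3 X R \<longleftrightarrow>
     \<not> (\<exists>a1\<in>X. \<exists>a2\<in>X. \<exists>a3\<in>X. \<exists>b1\<in>X. \<exists>b2\<in>X. \<exists>b3\<in>X.
          strictly_below R a1 a2 \<and> strictly_below R a2 a3 \<and>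
          strictly_below R b1 b2 \<and> strictly_below R b2 b3 \<and>
          (\<forall>a\<in>{a1,a2,a3}. \<forall>b\<in>{b1,b2,b3}. incomparable R a b))"

definition convex_sub :: "'a set \<Rightarrow> 'a rel \<Rightarrow> 'a set \<Rightarrow> bool" where
  "convex_sub X R Q \<longleftrightarrow> Q \<subseteq> X \<and>
     (\<forall>x\<in>Q. \<forall>z\<in>Q. \<forall>y\<in>X. strictly_below R x y \<and> strictly_below R y z \<longrightarrow> y \<in> Q)"

definition linear_extension :: "'a set \<Rightarrow> 'a rel \<Rightarrow> 'a rel \<Rightarrow> bool" where
  "linear_extension X R L \<longleftrightarrow> L \<subseteq> X \<times> X \<and> linear_order_on X L \<and> R \<subseteq> L"

definition realizer :: "'a set \<Rightarrow> 'a rel \<Rightarrow> 'a rel set \<Rightarrow> bool" where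
  "realizer X R Ls \<longleftrightarrow> Ls \<noteq> {} \<and> (\<forall>L\<in>Ls. linear_extension X R L) \<and> \<Inter> Ls = R"

definition dim :: "'a set \<Rightarrow> 'a rel \<Rightarrow> nat" where
  "dim X R = (LEAST d. \<exists>Ls. finite Ls \<and> card Ls = d \<and> realizer X R Ls)"

definition is_chain :: "'a set \<Rightarrow> 'a rel \<Rightarrow> 'a set \<Rightarrow> bool" where
  "is_chain X R C \<longleftrightarrow> C \<subseteq> X \<and> (\<forall>x\<in>C. \<forall>y\<in>C. (x, y) \<in> R \<or> (y, x) \<in> R)"

definition height :: "'a set \<Rightarrow> 'a rel \<Rightarrow> nat" where
  "height X R = Max {card C | C. is_chain X R C}"

end

theory Submission
  imports Defs "HOL-Library.Product_Lexorder"
begin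

text \<open>The poset is the standard example \<open>S\<^sub>n\<close> (\<open>a\<^sub>i < b\<^sub>j\<close> for \<open>i \<noteq> j\<close>), which has
  dimension \<open>n\<close>, with a chain \<open>c\<^sub>0 < \<dots> < c\<^sub>n\<^sub>-\<^sub>1\<close> inserted such that \<open>a\<^sub>i < c\<^sub>j\<close> for
  \<open>i \<le> j\<close> and \<open>c\<^sub>i < b\<^sub>j\<close> for \<open>i < j\<close>. Every 3-chain has a spine element in the middle, and
  the spine is a chain, so \<open>3 + 3\<close> is excluded. A subposet \<open>Q\<close> is realized by two
  extensions coming from an embedding into the plane, which only fail to separate the
  critical pairs \<open>(a\<^sub>i, b\<^sub>i)\<close>, plus one extension reversing each such pair inside \<open>Q\<close>.
  If \<open>Q\<close> is convex and contains the pairs with indices \<open>i < j\<close>, it contains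
  \<open>a\<^sub>i < c\<^sub>i < \<dots> < c\<^sub>j\<^sub>-\<^sub>1 < b\<^sub>j\<close>, so its height pays for those extensions.\<close>

lemma dim_le_card_realizer: "finite Ls \<Longrightarrow> realizer X R Ls \<Longrightarrow> dim X R \<le> card Ls"
  unfolding dim_def by (rule Least_le) auto

lemma dim_attained:
  assumes "finite Ls" "realizer X R Ls"
  obtains Ls' where "finite Ls'" "card Ls' = dim X R" "realizer X R Ls'"
proof -
  have "\<exists>Ls'. finite Ls' \<and> card Ls' = dim X R \<and> realizer X R Ls'"
    unfolding dim_def by (rule LeastI_ex) (use assms in blast)
  then show ?thesis using that by blast
qed

lemma card_chain_le_height: "finite X \<Longrightarrow> is_chain X R C \<Longrightarrow> card C \<le> height X R"
proof -
  assume "finite X" "is_chain X R C"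
  moreover have "finite {card C |C. is_chain X R C}"
    by (rule finite_subset[of _ "{..card X}"])
       (use \<open>finite X\<close> in \<open>auto simp: is_chain_def intro: card_mono\<close>)
  ultimately show ?thesis unfolding height_def by (auto intro: Max_ge)
qed

lemma linear_extensionD:
  assumes "linear_extension X R L"
  shows "refl_on X L" "trans L" "total_on X L" "R \<subseteq> L"
  using assms
  unfolding linear_extension_def linear_order_on_def partial_order_on_def preorder_on_def
  by auto

lemma linear_extension_sub_order:
  "linear_extension X R L \<Longrightarrow> Q \<subseteq> X \<Longrightarrow> linear_extension Q (sub_order Q R) (sub_order Q L)"
  unfolding linear_extension_def sub_order_def linear_order_on_def partial_order_on_def
    preorder_on_def refl_on_def trans_def antisym_def total_on_def
  by blast

lemma realizer_sub_order:
  assumes "Ls \<noteq> {}" "\<forall>L\<in>Ls. linear_extension X R L" "Q \<subseteq> X"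
    and "\<Inter> Ls \<inter> Q \<times> Q = R \<inter> Q \<times> Q"
  shows "realizer Q (sub_order Q R) (sub_order Q ` Ls)"
proof -
  have "\<Inter> (sub_order Q ` Ls) = \<Inter> Ls \<inter> Q \<times> Q"
    using \<open>Ls \<noteq> {}\<close> unfolding sub_order_def by blast
  moreover have "\<forall>L\<in>sub_order Q ` Ls. linear_extension Q (sub_order Q R) L"
    using assms(2,3) linear_extension_sub_order by blast
  ultimately show ?thesis
    using assms(1,4) unfolding realizer_def by (simp add: sub_order_def)
qed

text \<open>Given \<open>a\<^sub>i \<parallel> b\<^sub>i\<close> and \<open>a\<^sub>i < b\<^sub>j\<close> for \<open>i \<noteq> j\<close>, an extension putting \<open>b\<^sub>i\<close> below \<open>a\<^sub>i\<close>
  and \<open>b\<^sub>j\<close> below \<open>a\<^sub>j\<close> would give \<open>a\<^sub>i < b\<^sub>j < a\<^sub>j < b\<^sub>i\<close>; so different critical pairs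
  are reversed by different extensions.\<close>

lemma card_le_card_realizer_standard_example:
  assumes realizer: "realizer X R Ls" and "finite Ls"
    and critical: "\<And>i. i \<in> I \<Longrightarrow> a i \<in> X \<and> b i \<in> X \<and> (a i, b i) \<notin> R"
    and cross: "\<And>i j. i \<in> I \<Longrightarrow> j \<in> I \<Longrightarrow> i \<noteq> j \<Longrightarrow> (a i, b j) \<in> R"
  shows "card I \<le> card Ls"
proof -
  have "\<exists>L\<in>Ls. (a i, b i) \<notin> L" if "i \<in> I" for i
    using critical[OF that] realizer unfolding realizer_def by blast
  then obtain g where g: "\<And>i. i \<in> I \<Longrightarrow> g i \<in> Ls \<and> (a i, b i) \<notin> g i" by metis
  have ext: "linear_extension X R (g i)" if "i \<in> I" for i
    using realizer g[OF that] unfolding realizer_def by blast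
  have reversed: "(b i, a i) \<in> g i" if "i \<in> I" for i
  proof -
    note L = linear_extensionD[OF ext[OF that]]
    have "a i \<noteq> b i" using refl_onD[OF L(1)] critical[OF that] g[OF that] by metis
    then show ?thesis using L(3) critical[OF that] g[OF that] unfolding total_on_def by blast
  qed
  have "inj_on g I"
  proof (rule inj_onI, rule ccontr)
    fix i j assume ij: "i \<in> I" "j \<in> I" "g i = g j" "i \<noteq> j"
    note L = linear_extensionD[OF ext[OF ij(1)]]
    have "(a i, b j) \<in> g i" "(a j, b i) \<in> g i" using cross ij L(4) by blast+
    moreover have "(b j, a j) \<in> g i" using reversed[OF ij(2)] ij(3) by simp
    ultimately have "(a i, b i) \<in> g i" using transD[OF L(2)] by blast
    then show False using g[OF ij(1)] by blast
  qed
  then show ?thesis using card_inj_on_le[OF _ _ \<open>finite Ls\<close>] g by blast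
qed

lemma card_le_dim_standard_example:
  assumes "finite Ls" "realizer X R Ls"
    and "\<And>i. i \<in> I \<Longrightarrow> a i \<in> X \<and> b i \<in> X \<and> (a i, b i) \<notin> R"
    and "\<And>i j. i \<in> I \<Longrightarrow> j \<in> I \<Longrightarrow> i \<noteq> j \<Longrightarrow> (a i, b j) \<in> R"
  shows "card I \<le> dim X R"
proof -
  obtain Ls' where "finite Ls'" "card Ls' = dim X R" "realizer X R Ls'"
    using dim_attained assms(1,2) by blast
  then show ?thesis using card_le_card_realizer_standard_example assms(3,4) by metis
qed

definition order_by :: "('a \<Rightarrow> 'b::linorder) \<Rightarrow> 'a set \<Rightarrow> 'a rel" where
  "order_by f A = {(x, y). x \<in> A \<and> y \<in> A \<and> f x \<le> f y}"

lemma linear_order_on_order_by: "inj_on f A \<Longrightarrow> linear_order_on A (order_by f A)"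
  unfolding linear_order_on_def partial_order_on_def preorder_on_def refl_on_def trans_def
    antisym_def total_on_def order_by_def inj_on_def
  by (auto intro: order_trans antisym)

lemma linear_extension_order_by:
  "inj_on f X \<Longrightarrow> R \<subseteq> order_by f X \<Longrightarrow> linear_extension X R (order_by f X)"
  unfolding linear_extension_def using linear_order_on_order_by by (auto simp: order_by_def)

lemma dim_Id_on_le_2:
  assumes "finite X"
  shows "dim X (Id_on X) \<le> 2"
proof -
  obtain f :: "'a \<Rightarrow> nat" where f: "inj_on f X"
    using finite_imp_inj_to_nat_seg[OF assms] by blast
  define g where "g x = - int (f x)" for x
  have g: "inj_on g X" using f by (auto simp: inj_on_def g_def)
  have "Id_on X \<subseteq> order_by f X" "Id_on X \<subseteq> order_by g X" by (auto simp: order_by_def)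
  then have "linear_extension X (Id_on X) (order_by f X)" "linear_extension X (Id_on X) (order_by g X)"
    using linear_extension_order_by f g by blast+
  moreover have "order_by f X \<inter> order_by g X = Id_on X"
    using f by (auto simp: order_by_def g_def inj_on_def)
  ultimately have "realizer X (Id_on X) {order_by f X, order_by g X}"
    unfolding realizer_def by simp
  then have "dim X (Id_on X) \<le> card {order_by f X, order_by g X}"
    by (rule dim_le_card_realizer[rotated]) simp
  also have "\<dots> \<le> 2" by (rule card_insert_le_m1) simp_all
  finally show ?thesis .
qed

lemma dim_empty: "dim {} ({} :: 'a rel) \<le> 1"
proof -
  have "realizer {} {} {{} :: 'a rel}"
    unfolding realizer_def linear_extension_def linear_order_on_def partial_order_on_def
      preorder_on_def by (simp add: refl_on_def trans_def antisym_def total_on_def)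
  from dim_le_card_realizer[OF _ this] show ?thesis by simp
qed

text \<open>The element \<open>3 * i + k\<close> encodes \<open>a\<^sub>i\<close>, \<open>b\<^sub>i\<close> or \<open>c\<^sub>i\<close> for \<open>k = 0, 1, 2\<close>.\<close>

definition kind :: "nat \<Rightarrow> nat" where "kind x = x mod 3"
definition idx :: "nat \<Rightarrow> nat" where "idx x = x div 3"

lemma kind_cases: "kind x = 0 \<or> kind x = 1 \<or> kind x = 2"
  unfolding kind_def by presburger

lemma nat_eq_iff_kind_idx: "x = y \<longleftrightarrow> kind x = kind y \<and> idx x = idx y"
  unfolding kind_def idx_def by (metis div_mult_mod_eq)

lemma kind_idx_simps [simp]:
  "kind (3 * i) = 0" "idx (3 * i) = i" "kind (3 * i + 1) = 1" "idx (3 * i + 1) = i"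
  "kind (3 * i + 2) = 2" "idx (3 * i + 2) = i"
  "kind (Suc (3 * i)) = 1" "idx (Suc (3 * i)) = i"
  "kind (Suc (Suc (3 * i))) = 2" "idx (Suc (Suc (3 * i))) = i"
  unfolding kind_def idx_def by presburger+

lemma idx_kind_decomp: "x = 3 * idx x + kind x"
  unfolding kind_def idx_def by simp

definition spine_less :: "nat \<Rightarrow> nat \<Rightarrow> bool" where
  "spine_less x y \<longleftrightarrow>
     (kind x = 0 \<and> kind y = 1 \<and> idx x \<noteq> idx y) \<or> (kind x = 0 \<and> kind y = 2 \<and> idx x \<le> idx y) \<or>
     (kind x = 2 \<and> kind y = 1 \<and> idx x < idx y) \<or> (kind x = 2 \<and> kind y = 2 \<and> idx x < idx y)"

definition spine_set :: "nat \<Rightarrow> nat set" where "spine_set n = {..<3 * n}"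

definition spine_order :: "nat \<Rightarrow> nat rel" where
  "spine_order n = {(x, y). x \<in> spine_set n \<and> y \<in> spine_set n \<and> (x = y \<or> spine_less x y)}"

lemma mem_spine_set_iff: "x \<in> spine_set n \<longleftrightarrow> idx x < n"
  unfolding spine_set_def idx_def by auto

lemma spine_less_trans: "spine_less x y \<Longrightarrow> spine_less y z \<Longrightarrow> spine_less x z"
  unfolding spine_less_def by auto

lemma spine_less_asym: "spine_less x y \<Longrightarrow> \<not> spine_less y x"
  unfolding spine_less_def by auto

lemma poset_spine: "poset (spine_set n) (spine_order n)"
  unfolding poset_def partial_order_on_def preorder_on_def refl_on_def trans_def antisym_def
    spine_order_def
  using spine_less_trans spine_less_asym by blast

lemma strictly_below_spine_order_iff:
  "strictly_below (spine_order n) x y \<longleftrightarrow> x \<in> spine_set n \<and> y \<in> spine_set n \<and> spine_less x y"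
  unfolding strictly_below_def spine_order_def spine_less_def by auto

lemma kind_middle_of_3_chain:
  "strictly_below (spine_order n) x y \<Longrightarrow> strictly_below (spine_order n) y z \<Longrightarrow> kind y = 2"
  using kind_cases[of y] unfolding strictly_below_spine_order_iff spine_less_def by auto

lemma excludes_3_3_spine: "excludes_3_3 (spine_set n) (spine_order n)"
  unfolding excludes_3_3_def
proof clarify
  fix a1 a2 a3 b1 b2 b3
  assume chains: "strictly_below (spine_order n) a1 a2" "strictly_below (spine_order n) a2 a3"
      "strictly_below (spine_order n) b1 b2" "strictly_below (spine_order n) b2 b3"
    and "\<forall>a\<in>{a1, a2, a3}. \<forall>b\<in>{b1, b2, b3}. incomparable (spine_order n) a b"
    and "a2 \<in> spine_set n" "b2 \<in> spine_set n"
  then have "incomparable (spine_order n) a2 b2" by blast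
  moreover have "kind a2 = 2" "kind b2 = 2" using chains kind_middle_of_3_chain by blast+
  ultimately show False
    using \<open>a2 \<in> spine_set n\<close> \<open>b2 \<in> spine_set n\<close> nat_eq_iff_kind_idx[of a2 b2]
    unfolding incomparable_def spine_order_def spine_less_def by auto
qed

definition plane_x :: "nat \<Rightarrow> nat \<Rightarrow> int" where
  "plane_x n x =
     (if kind x = 0 then 2 * int (idx x) - 1 else if kind x = 2 then 2 * int (idx x)
      else 4 * int n + 10 - 2 * int (idx x))"

definition plane_y :: "nat \<Rightarrow> nat \<Rightarrow> int" where
  "plane_y n x =
     (if kind x = 0 then - 2 * int (idx x) - 1 else if kind x = 2 then 2 * int (idx x)
      else 2 * int (idx x) - 1)"

lemma plane_dominance_iff:
  assumes "x \<in> spine_set n" "y \<in> spine_set n"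
  shows "(plane_x n x \<le> plane_x n y \<and> plane_y n x \<le> plane_y n y) \<longleftrightarrow>
    x = y \<or> spine_less x y \<or> (kind x = 0 \<and> kind y = 1 \<and> idx x = idx y)"
  using assms kind_cases[of x] kind_cases[of y]
  unfolding mem_spine_set_iff plane_x_def plane_y_def spine_less_def nat_eq_iff_kind_idx[of x y]
  by auto

lemma plane_inj:
  assumes "x \<in> spine_set n" "y \<in> spine_set n" "plane_x n x = plane_x n y" "plane_y n x = plane_y n y"
  shows "x = y"
  using plane_dominance_iff[OF assms(1,2)] plane_dominance_iff[OF assms(2,1)] assms(3,4)
  unfolding spine_less_def by auto

text \<open>The flip for \<open>i\<close> puts \<open>b\<^sub>i\<close> directly below \<open>a\<^sub>i\<close>: the other \<open>a\<close>'s at the bottom,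
  the other \<open>b\<close>'s at the top, and \<open>c\<^sub>k\<close> below or above the pair according to \<open>k < i\<close>.\<close>

definition flip_rank :: "nat \<Rightarrow> nat \<Rightarrow> nat \<Rightarrow> nat" where
  "flip_rank n i x =
     (if kind x = 0 then (if idx x = i then n + 2 else 0)
      else if kind x = 2 then (if idx x < i then 1 + idx x else n + 3 + idx x)
      else (if idx x = i then n + 1 else 3 * n + 3))"

lemma flip_rank_strict_mono:
  assumes "x \<in> spine_set n" "y \<in> spine_set n" "spine_less x y"
  shows "flip_rank n i x < flip_rank n i y"
  using assms unfolding mem_spine_set_iff spine_less_def flip_rank_def by auto

definition spine_extensions :: "nat \<Rightarrow> nat set \<Rightarrow> nat rel set" where
  "spine_extensions n I =
     insert (order_by (\<lambda>x. (plane_x n x, plane_y n x)) (spine_set n))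
       (insert (order_by (\<lambda>x. (plane_y n x, plane_x n x)) (spine_set n))
         ((\<lambda>i. order_by (\<lambda>x. (flip_rank n i x, x)) (spine_set n)) ` I))"

lemma linear_extension_spine_extensions:
  "L \<in> spine_extensions n I \<Longrightarrow> linear_extension (spine_set n) (spine_order n) L"
  unfolding spine_extensions_def
proof (elim insertE imageE; hypsubst, rule linear_extension_order_by)
  show "inj_on (\<lambda>x. (plane_x n x, plane_y n x)) (spine_set n)"
    "inj_on (\<lambda>x. (plane_y n x, plane_x n x)) (spine_set n)"
    "inj_on (\<lambda>x. (flip_rank n i x, x)) (spine_set n)" for i
    using plane_inj by (auto simp: inj_on_def)
  show "spine_order n \<subseteq> order_by (\<lambda>x. (plane_x n x, plane_y n x)) (spine_set n)"
    "spine_order n \<subseteq> order_by (\<lambda>x. (plane_y n x, plane_x n x)) (spine_set n)"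
    "spine_order n \<subseteq> order_by (\<lambda>x. (flip_rank n i x, x)) (spine_set n)" for i
    using plane_dominance_iff flip_rank_strict_mono
    by (fastforce simp: spine_order_def order_by_def)+
qed

definition paired_indices :: "nat \<Rightarrow> nat set \<Rightarrow> nat set" where
  "paired_indices n Q = {i. i < n \<and> 3 * i \<in> Q \<and> 3 * i + 1 \<in> Q}"

lemma Inter_spine_extensions_sub_order:
  assumes "Q \<subseteq> spine_set n"
  shows "\<Inter> (spine_extensions n (paired_indices n Q)) \<inter> Q \<times> Q = spine_order n \<inter> Q \<times> Q"
proof (intro equalityI subsetI)
  fix p assume p: "p \<in> \<Inter> (spine_extensions n (paired_indices n Q)) \<inter> Q \<times> Q"
  then obtain x y where xy: "p = (x, y)" "x \<in> Q" "y \<in> Q" by blast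
  then have X: "x \<in> spine_set n" "y \<in> spine_set n" using assms by auto
  have "x = y \<or> spine_less x y \<or> (kind x = 0 \<and> kind y = 1 \<and> idx x = idx y)"
    using p xy plane_dominance_iff[OF X] unfolding spine_extensions_def order_by_def by auto
  moreover have "\<not> (kind x = 0 \<and> kind y = 1 \<and> idx x = idx y)"
  proof
    assume critical: "kind x = 0 \<and> kind y = 1 \<and> idx x = idx y"
    then have "x = 3 * idx x" "y = 3 * idx x + 1" using idx_kind_decomp[of x] idx_kind_decomp[of y] by auto
    then have "idx x \<in> paired_indices n Q"
      using xy X unfolding paired_indices_def mem_spine_set_iff by auto
    then have "(x, y) \<in> order_by (\<lambda>z. (flip_rank n (idx x) z, z)) (spine_set n)"
      using p xy unfolding spine_extensions_def by blast
    then show False using critical unfolding order_by_def flip_rank_def by auto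
  qed
  ultimately show "p \<in> spine_order n \<inter> Q \<times> Q" using xy X unfolding spine_order_def by auto
next
  fix p assume "p \<in> spine_order n \<inter> Q \<times> Q"
  then show "p \<in> \<Inter> (spine_extensions n (paired_indices n Q)) \<inter> Q \<times> Q"
    using linear_extension_spine_extensions unfolding linear_extension_def by blast
qed

lemma realizer_spine_sub_order:
  "Q \<subseteq> spine_set n \<Longrightarrow>
    realizer Q (sub_order Q (spine_order n)) (sub_order Q ` spine_extensions n (paired_indices n Q))"
  by (rule realizer_sub_order)
     (use linear_extension_spine_extensions Inter_spine_extensions_sub_order in
       \<open>auto simp: spine_extensions_def\<close>)

lemma finite_paired_indices: "finite (paired_indices n Q)"
  unfolding paired_indices_def by simp

lemma dim_spine_sub_order_le:
  assumes "Q \<subseteq> spine_set n"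
  shows "dim Q (sub_order Q (spine_order n)) \<le> card (paired_indices n Q) + 2"
proof -
  let ?I = "paired_indices n Q"
  have "finite (spine_extensions n ?I)"
    using finite_paired_indices unfolding spine_extensions_def by simp
  then have "dim Q (sub_order Q (spine_order n)) \<le> card (sub_order Q ` spine_extensions n ?I)"
    by (intro dim_le_card_realizer realizer_spine_sub_order assms) simp
  also have "\<dots> \<le> card (spine_extensions n ?I)"
    by (rule card_image_le) fact
  also have "\<dots> \<le> card ((\<lambda>i. order_by (\<lambda>x. (flip_rank n i x, x)) (spine_set n)) ` ?I) + 2"
    unfolding spine_extensions_def using finite_paired_indices by (simp add: card_insert_if)
  also have "\<dots> \<le> card ?I + 2"
    using card_image_le[OF finite_paired_indices] by simp
  finally show ?thesis .
qed

lemma n_le_dim_spine: "n \<le> dim (spine_set n) (spine_order n)"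
proof -
  have "spine_set n \<subseteq> spine_set n" ..
  from realizer_spine_sub_order[OF this] have realizer: "realizer (spine_set n) (spine_order n)
      (sub_order (spine_set n) ` spine_extensions n (paired_indices n (spine_set n)))"
    by (simp add: sub_order_def spine_order_def Int_absorb2 subset_iff)
  have "finite (sub_order (spine_set n) ` spine_extensions n (paired_indices n (spine_set n)))"
    using finite_paired_indices unfolding spine_extensions_def by simp
  from card_le_dim_standard_example[OF this realizer, of "{..<n}" "\<lambda>i. 3 * i" "\<lambda>i. 3 * i + 1"]
  have "card {..<n} \<le> dim (spine_set n) (spine_order n)"
    by (auto simp: spine_order_def spine_set_def spine_less_def)
  then show ?thesis by simp
qed

lemma convex_subD:
  "convex_sub X R Q \<Longrightarrow> x \<in> Q \<Longrightarrow> z \<in> Q \<Longrightarrow> y \<in> X \<Longrightarrow>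
    strictly_below R x y \<Longrightarrow> strictly_below R y z \<Longrightarrow> y \<in> Q"
  unfolding convex_sub_def by blast

lemma chain_in_convex:
  assumes convex: "convex_sub (spine_set n) (spine_order n) Q"
    and i: "i \<in> paired_indices n Q" and j: "j \<in> paired_indices n Q" and "i < j"
  shows "j - i + 2 \<le> height Q (sub_order Q (spine_order n))"
proof -
  have Q: "Q \<subseteq> spine_set n" using convex unfolding convex_sub_def by blast
  have "finite Q" using Q finite_subset unfolding spine_set_def by blast
  have ai: "3 * i \<in> Q" "i < n" and bj: "3 * j + 1 \<in> Q" "j < n"
    using i j unfolding paired_indices_def by auto
  define C where "C = insert (3 * i) (insert (3 * j + 1) ((\<lambda>k. 3 * k + 2) ` {i..<j}))"
  have "3 * k + 2 \<in> Q" if "i \<le> k" "k < j" for k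
  proof -
    have "strictly_below (spine_order n) (3 * i) (3 * k + 2)"
      "strictly_below (spine_order n) (3 * k + 2) (3 * j + 1)"
      using that ai bj unfolding strictly_below_spine_order_iff mem_spine_set_iff spine_less_def by auto
    moreover have "3 * k + 2 \<in> spine_set n" using that bj by (simp add: mem_spine_set_iff)
    ultimately show ?thesis using convex_subD[OF convex ai(1) bj(1)] by blast
  qed
  then have CQ: "C \<subseteq> Q" unfolding C_def using ai bj by auto
  have C_cases: "(kind u = 0 \<and> idx u = i) \<or> (kind u = 1 \<and> idx u = j) \<or> (kind u = 2 \<and> i \<le> idx u \<and> idx u < j)"
    if "u \<in> C" for u
    using that unfolding C_def by auto
  have comparable: "u = v \<or> spine_less u v \<or> spine_less v u" if "u \<in> C" "v \<in> C" for u v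
    using C_cases[OF that(1)] C_cases[OF that(2)] \<open>i < j\<close>
    unfolding spine_less_def nat_eq_iff_kind_idx[of u v] by (elim disjE) auto
  have "is_chain Q (sub_order Q (spine_order n)) C"
    using CQ Q comparable unfolding is_chain_def sub_order_def spine_order_def by blast
  then have "card C \<le> height Q (sub_order Q (spine_order n))"
    by (rule card_chain_le_height[OF \<open>finite Q\<close>])
  moreover have "card C = j - i + 2"
  proof -
    have "card ((\<lambda>k. 3 * k + 2) ` {i..<j}) = j - i" by (simp add: card_image inj_on_def)
    moreover have "3 * i \<notin> (\<lambda>k. 3 * k + 2) ` {i..<j}" "3 * j + 1 \<notin> (\<lambda>k. 3 * k + 2) ` {i..<j}"
      by (auto, presburger+)
    ultimately show ?thesis unfolding C_def by simp
  qed
  ultimately show ?thesis by simp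
qed

lemma card_paired_indices_lt_height:
  assumes convex: "convex_sub (spine_set n) (spine_order n) Q"
    and two: "2 \<le> card (paired_indices n Q)"
  shows "card (paired_indices n Q) + 1 \<le> height Q (sub_order Q (spine_order n))"
proof -
  let ?I = "paired_indices n Q"
  define i where "i = Min ?I"
  define j where "j = Max ?I"
  have "?I \<noteq> {}" using two by auto
  then have "i \<in> ?I" "j \<in> ?I" "?I \<subseteq> {i..j}"
    unfolding i_def j_def using finite_paired_indices by auto
  then have card: "card ?I \<le> j + 1 - i"
    using card_mono[of "{i..j}" ?I] by simp
  with two have "i < j" by linarith
  with chain_in_convex[OF convex \<open>i \<in> ?I\<close> \<open>j \<in> ?I\<close>] card show ?thesis by linarith
qed

lemma dim_convex_spine_le_height:
  assumes convex: "convex_sub (spine_set n) (spine_order n) Q"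
  shows "dim Q (sub_order Q (spine_order n)) \<le> height Q (sub_order Q (spine_order n)) + 1"
proof -
  let ?S = "sub_order Q (spine_order n)"
  have Q: "Q \<subseteq> spine_set n" using convex unfolding convex_sub_def by blast
  then have "finite Q" using finite_subset unfolding spine_set_def by blast
  show ?thesis
  proof (cases "?S = Id_on Q")
    case True
    show ?thesis
    proof (cases "Q = {}")
      case True
      then have "dim Q ?S \<le> 1" using dim_empty by (simp add: sub_order_def)
      then show ?thesis by linarith
    next
      case False
      then obtain x where "x \<in> Q" by blast
      then have "is_chain Q ?S {x}" using \<open>?S = Id_on Q\<close> unfolding is_chain_def by auto
      then have "1 \<le> height Q ?S" using card_chain_le_height[OF \<open>finite Q\<close>] by fastforce
      then show ?thesis using dim_Id_on_le_2[OF \<open>finite Q\<close>] \<open>?S = Id_on Q\<close> by simp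
    qed
  next
    case False
    then obtain x y where "x \<in> Q" "y \<in> Q" "x \<noteq> y" "(x, y) \<in> ?S"
      using Q unfolding sub_order_def spine_order_def by auto
    then have "is_chain Q ?S {x, y}" using Q unfolding is_chain_def sub_order_def spine_order_def by auto
    then have "2 \<le> height Q ?S"
      using card_chain_le_height[OF \<open>finite Q\<close>] \<open>x \<noteq> y\<close> by fastforce
    moreover have "card (paired_indices n Q) \<le> 1 \<or> card (paired_indices n Q) + 1 \<le> height Q ?S"
      using card_paired_indices_lt_height[OF convex] by linarith
    ultimately show ?thesis using dim_spine_sub_order_le[OF Q] by linarith
  qed
qed

theorem proposition9:
  fixes n :: nat
  assumes "n \<ge> 2"
  shows "\<exists>(X :: nat set) R. finite X \<and> poset X R \<and> excludes_3_3 X R \<and> dim X R \<ge> n \<and>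
           (\<forall>Q. convex_sub X R Q \<longrightarrow>
                 dim Q (sub_order Q R) \<le> height Q (sub_order Q R) + 1)"
proof (intro exI conjI allI impI)
  show "finite (spine_set n)" by (simp add: spine_set_def)
qed (fact poset_spine excludes_3_3_spine n_le_dim_spine dim_convex_spine_le_height)+

end
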